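(* Let $(e_i)_{i\in\mathbb Z}$ be i.i.d. $\mathcal N(0,1)$ random variables, $T$ a bimeasurable invertible measure-preserving map with $e_i\circ T=e_{i+1}$, $U g=g\circ T$, $\mathcal F_k=\sigma\{e_i:i\le k\}$, and $X_n=\sum_{i=0}^\infty a_ie_{n-i}$ with real $a_i$, $\sum a_i^2<\infty$. If $m\in L^2(\mathcal F_0)\ominus L^2(\mathcal F_{-1})$ satisfies $$\frac1{\sqrt n}\Big\|\sum_{i=0}^{n-1}(X_i-U^im)\Big\|_2\to0,$$ then $m=ce_0$ for some $c\in\mathbb R$.
   Context: $L^2(\mathcal F_0)\ominus L^2(\mathcal F_{-1})$ denotes the orthogonal complement of $L^2(\mathcal F_{-1})$ in $L^2(\mathcal F_0)$. *)

theory Defs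
  imports "HOL-Probability.Probability"
begin

definition measure_preserving :: "'a measure \<Rightarrow> ('a \<Rightarrow> 'a) \<Rightarrow> bool" where
  "measure_preserving M T \<longleftrightarrow> T \<in> M \<rightarrow>\<^sub>M M \<and> distr M M T = M"

definition nat_filtration :: "'a measure \<Rightarrow> (int \<Rightarrow> 'a \<Rightarrow> real) \<Rightarrow> int \<Rightarrow> 'a measure" where
  "nat_filtration M e k =
     sigma (space M) {e i -` A \<inter> space M | i A. i \<le> k \<and> A \<in> sets borel}"

definition L2norm :: "'a measure \<Rightarrow> ('a \<Rightarrow> real) \<Rightarrow> real" where
  "L2norm M f = sqrt (\<integral>x. (f x)\<^sup>2 \<partial>M)"

definition in_L2 :: "'a measure \<Rightarrow> 'a measure \<Rightarrow> ('a \<Rightarrow> real) \<Rightarrow> bool" where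
  "in_L2 M G f \<longleftrightarrow> f \<in> borel_measurable G \<and> integrable M (\<lambda>x. (f x)\<^sup>2)"

end

theory Submission
  imports Defs
begin

(*
  Let c = E[m e_0] and r = m - c e_0.  The theorem says that the residual r vanishes a.e.

  (1) r is orthogonal to every e_k: for k < 0 because m is orthogonal to L^2(F_{-1}), for
      k = 0 by the choice of c, for k > 0 by independence of e_k from F_0.  Moreover the
      shifted copies r o T^j are pairwise orthogonal, since r o T^{-d} lies in L^2(F_{-1})
      for d >= 1; and they are orthogonal to all e_k.
  (2) The series X_n = sum_i a_i e_{n-i} converges almost surely (via Kolmogorov's maximal
      inequality) and in L^2.  Hence X_n is square integrable and, like the e_k, orthogonal
      to every r o T^j.
  (3) sum_{i<n} (X_i - m o T^i) = sum_{i<n} (X_i - c e_i) - sum_{i<n} r o T^i, where the two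
      sums are orthogonal and the second has squared L^2 norm n ||r||^2.  So the normalised
      norm in the hypothesis is at least ||r||, which forces ||r|| = 0.
*)

section \<open>Square-integrable functions\<close>

abbreviation square_integrable :: "'a measure \<Rightarrow> ('a \<Rightarrow> real) \<Rightarrow> bool" where
  "square_integrable M f \<equiv> in_L2 M M f"

(* The product of two L^2 functions is integrable, as 2|fg| <= f^2 + g^2. *)
lemma square_integrable_mult:
  assumes f: "square_integrable M f" and g: "square_integrable M g"
  shows "integrable M (\<lambda>x. f x * g x)"
proof (rule Bochner_Integration.integrable_bound)
  show "integrable M (\<lambda>x. (f x)\<^sup>2 + (g x)\<^sup>2)" using f g by (auto simp: in_L2_def)
  show "(\<lambda>x. f x * g x) \<in> borel_measurable M" using f g by (auto simp: in_L2_def)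
  show "AE x in M. norm (f x * g x) \<le> norm ((f x)\<^sup>2 + (g x)\<^sup>2)"
  proof (rule AE_I2)
    fix x
    have "0 \<le> (\<bar>f x\<bar> - \<bar>g x\<bar>)\<^sup>2" by simp
    then have "2 * \<bar>f x * g x\<bar> \<le> (f x)\<^sup>2 + (g x)\<^sup>2"
      by (simp add: power2_eq_square algebra_simps abs_mult)
    then show "norm (f x * g x) \<le> norm ((f x)\<^sup>2 + (g x)\<^sup>2)" by simp
  qed
qed

lemma (in finite_measure) square_integrable_integrable:
  "square_integrable M f \<Longrightarrow> integrable M f"
  using square_integrable_mult[of M f "\<lambda>_. 1"] by (simp add: in_L2_def)

lemma square_integrable_add:
  assumes f: "square_integrable M f" and g: "square_integrable M g"
  shows "square_integrable M (\<lambda>x. f x + g x)"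
proof -
  have "integrable M (\<lambda>x. (f x)\<^sup>2 + 2 * (f x * g x) + (g x)\<^sup>2)"
    using square_integrable_mult[OF f g] f g by (auto simp: in_L2_def)
  moreover have "(\<lambda>x. (f x)\<^sup>2 + 2 * (f x * g x) + (g x)\<^sup>2) = (\<lambda>x. (f x + g x)\<^sup>2)"
    by (auto simp: power2_eq_square algebra_simps)
  ultimately show ?thesis using f g by (auto simp: in_L2_def)
qed

lemma square_integrable_cmult:
  "square_integrable M f \<Longrightarrow> square_integrable M (\<lambda>x. c * f x)"
  by (auto simp: in_L2_def power_mult_distrib)

lemma square_integrable_diff:
  "square_integrable M f \<Longrightarrow> square_integrable M g \<Longrightarrow> square_integrable M (\<lambda>x. f x - g x)"
  using square_integrable_add[of M f "\<lambda>x. (-1) * g x"] square_integrable_cmult[of M g "-1"]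
  by simp

lemma square_integrable_sum:
  "finite I \<Longrightarrow> (\<And>i. i \<in> I \<Longrightarrow> square_integrable M (f i))
    \<Longrightarrow> square_integrable M (\<lambda>x. \<Sum>i\<in>I. f i x)"
proof (induction I rule: finite_induct)
  case empty
  then show ?case by (simp add: in_L2_def)
next
  case (insert i I)
  then show ?case using square_integrable_add[of M "f i" "\<lambda>x. \<Sum>i\<in>I. f i x"] by simp
qed

lemma square_integrable_indicator:
  assumes f: "square_integrable M f" and A: "A \<in> sets M"
  shows "square_integrable M (\<lambda>x. f x * indicator A x)"
proof -
  have "(\<lambda>x. (f x * indicator A x)\<^sup>2) = (\<lambda>x. (f x)\<^sup>2 * indicator A x)"
    by (auto simp: indicator_def)
  then show ?thesis
    using f integrable_real_mult_indicator[OF A, of "\<lambda>x. (f x)\<^sup>2"] A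
    by (auto simp: in_L2_def)
qed

(* A weighted Cauchy-Schwarz bound |E[fh]| <= (t E[f^2] + E[h^2] / t) / 2 for t > 0; it makes
   the L^2 inner product continuous, which is how orthogonality passes to L^2 limits. *)
lemma abs_integral_mult_le:
  fixes t :: real
  assumes f: "square_integrable M f" and h: "square_integrable M h" and t: "0 < t"
  shows "\<bar>\<integral>x. f x * h x \<partial>M\<bar> \<le> (t * (\<integral>x. (f x)\<^sup>2 \<partial>M) + (\<integral>x. (h x)\<^sup>2 \<partial>M) / t) / 2"
proof -
  have pointwise: "\<bar>u * v\<bar> \<le> (t * u\<^sup>2 + v\<^sup>2 / t) / 2" for u v :: real
  proof -
    have "0 \<le> (t * \<bar>u\<bar> - \<bar>v\<bar>)\<^sup>2 / t" using t by simp
    also have "(t * \<bar>u\<bar> - \<bar>v\<bar>)\<^sup>2 / t = t * u\<^sup>2 + v\<^sup>2 / t - 2 * \<bar>u * v\<bar>"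
      using t by (simp add: power2_eq_square field_simps abs_mult)
    finally show ?thesis by simp
  qed
  have "\<bar>\<integral>x. f x * h x \<partial>M\<bar> \<le> (\<integral>x. \<bar>f x * h x\<bar> \<partial>M)"
    by (rule integral_abs_bound)
  also have "\<dots> \<le> (\<integral>x. (t * (f x)\<^sup>2 + (h x)\<^sup>2 / t) / 2 \<partial>M)"
    using square_integrable_mult[OF f h] f h pointwise
    by (intro integral_mono) (auto simp: in_L2_def)
  also have "\<dots> = (t * (\<integral>x. (f x)\<^sup>2 \<partial>M) + (\<integral>x. (h x)\<^sup>2 \<partial>M) / t) / 2"
    using f h by (simp add: in_L2_def)
  finally show ?thesis .
qed

lemma square_integrable_Fatou:
  fixes f :: "nat \<Rightarrow> 'a \<Rightarrow> real"
  assumes conv: "AE x in M. (\<lambda>n. f n x) \<longlonglongrightarrow> g x"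
    and f_meas: "\<And>n. f n \<in> borel_measurable M" and g_meas: "g \<in> borel_measurable M"
    and bound: "\<And>n. N \<le> n \<Longrightarrow> integrable M (\<lambda>x. (f n x)\<^sup>2) \<and> (\<integral>x. (f n x)\<^sup>2 \<partial>M) \<le> t"
  shows "square_integrable M g" and "(\<integral>x. (g x)\<^sup>2 \<partial>M) \<le> t"
proof -
  have t: "0 \<le> t"
  proof -
    have "0 \<le> (\<integral>x. (f N x)\<^sup>2 \<partial>M)" by simp
    then show ?thesis using bound[of N] by linarith
  qed
  have nn_bound: "(\<integral>\<^sup>+x. ennreal ((f n x)\<^sup>2) \<partial>M) \<le> ennreal t" if "N \<le> n" for n
    using bound[OF that] by (simp add: nn_integral_eq_integral ennreal_leI)
  have "(\<integral>\<^sup>+x. ennreal ((g x)\<^sup>2) \<partial>M) = (\<integral>\<^sup>+x. liminf (\<lambda>n. ennreal ((f n x)\<^sup>2)) \<partial>M)"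
  proof (rule nn_integral_cong_AE)
    show "AE x in M. ennreal ((g x)\<^sup>2) = liminf (\<lambda>n. ennreal ((f n x)\<^sup>2))"
      using conv
    proof (rule AE_mp, intro AE_I2 impI)
      fix x assume "(\<lambda>n. f n x) \<longlonglongrightarrow> g x"
      then have "(\<lambda>n. ennreal ((f n x)\<^sup>2)) \<longlonglongrightarrow> ennreal ((g x)\<^sup>2)"
        by (intro tendsto_ennrealI tendsto_intros)
      then show "ennreal ((g x)\<^sup>2) = liminf (\<lambda>n. ennreal ((f n x)\<^sup>2))"
        using lim_imp_Liminf by force
    qed
  qed
  also have "\<dots> \<le> liminf (\<lambda>n. \<integral>\<^sup>+x. ennreal ((f n x)\<^sup>2) \<partial>M)"
    using f_meas by (intro nn_integral_liminf) measurable
  also have "\<dots> \<le> ennreal t"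
    by (rule Liminf_le) (auto simp: eventually_sequentially intro!: exI[of _ N] nn_bound)
  finally have nn: "(\<integral>\<^sup>+x. ennreal ((g x)\<^sup>2) \<partial>M) \<le> ennreal t" .
  have int: "integrable M (\<lambda>x. (g x)\<^sup>2)"
  proof (rule integrableI_bounded)
    show "(\<lambda>x. (g x)\<^sup>2) \<in> borel_measurable M" using g_meas by measurable
    show "(\<integral>\<^sup>+x. ennreal (norm ((g x)\<^sup>2)) \<partial>M) < \<infinity>"
      using nn by (simp add: le_less_trans)
  qed
  then show "square_integrable M g" using g_meas by (simp add: in_L2_def)
  have "ennreal (\<integral>x. (g x)\<^sup>2 \<partial>M) \<le> ennreal t"
    using nn by (simp add: nn_integral_eq_integral[OF int])
  then show "(\<integral>x. (g x)\<^sup>2 \<partial>M) \<le> t" using t by (simp add: ennreal_le_iff)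
qed

section \<open>Measure-preserving maps\<close>

lemma measure_preserving_funpow:
  "measure_preserving M T \<Longrightarrow> measure_preserving M (T ^^ n)"
proof (induction n)
  case 0
  then show ?case by (simp add: measure_preserving_def id_def)
next
  case (Suc n)
  have T: "T \<in> M \<rightarrow>\<^sub>M M" "distr M M T = M"
    using Suc.prems by (auto simp: measure_preserving_def)
  have Tn: "T ^^ n \<in> M \<rightarrow>\<^sub>M M" "distr M M (T ^^ n) = M"
    using Suc by (auto simp: measure_preserving_def)
  have "distr M M (T \<circ> T ^^ n) = distr (distr M M (T ^^ n)) M T"
    by (rule distr_distr[symmetric]) (use T Tn in auto)
  then show ?case using T Tn unfolding measure_preserving_def
    by (auto intro: measurable_comp)
qed

lemma measure_preserving_integral:
  fixes f :: "'a \<Rightarrow> real"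
  assumes "measure_preserving M T" "f \<in> borel_measurable M"
  shows "(\<integral>x. f (T x) \<partial>M) = (\<integral>x. f x \<partial>M)"
proof -
  have "(\<integral>x. f (T x) \<partial>M) = integral\<^sup>L (distr M M T) f"
    by (rule integral_distr[symmetric]) (use assms in \<open>auto simp: measure_preserving_def\<close>)
  then show ?thesis using assms by (simp add: measure_preserving_def)
qed

lemma measure_preserving_square_integrable:
  assumes T: "measure_preserving M T" and f: "square_integrable M f"
  shows "square_integrable M (\<lambda>x. f (T x))"
proof -
  have T_meas: "T \<in> M \<rightarrow>\<^sub>M M" and T_distr: "distr M M T = M"
    using T by (auto simp: measure_preserving_def)
  have f_meas: "f \<in> borel_measurable M" using f by (simp add: in_L2_def)
  have "integrable (distr M M T) (\<lambda>x. (f x)\<^sup>2) \<longleftrightarrow> integrable M (\<lambda>x. (f (T x))\<^sup>2)"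
    by (rule integrable_distr_eq) (use T_meas f_meas in auto)
  then show ?thesis
    using f T_distr measurable_compose[OF T_meas f_meas] by (simp add: in_L2_def)
qed

section \<open>Independent sequences of centred, unit-variance variables\<close>

locale indep_std_seq = prob_space M for M :: "'a measure" +
  fixes e :: "int \<Rightarrow> 'a \<Rightarrow> real"
  assumes indep: "indep_vars (\<lambda>_. borel) e UNIV"
    and square_integrable_e: "square_integrable M (e i)"
    and e_mean: "(\<integral>x. e i x \<partial>M) = 0"
    and e_second_moment: "(\<integral>x. (e i x)\<^sup>2 \<partial>M) = 1"

lemma std_normal_indep_std_seq:
  assumes "prob_space M" and "prob_space.indep_vars M (\<lambda>_. borel) e UNIV"
    and gauss: "\<And>i. distributed M lborel (e i) std_normal_density"
  shows "indep_std_seq M e"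
proof -
  interpret prob_space M by fact
  have mean: "(\<integral>x. e i x \<partial>M) = 0" for i
    using standard_normal_distributed_expectation[OF gauss[of i]] by simp
  show ?thesis
  proof unfold_locales
    show "indep_vars (\<lambda>_. borel) e UNIV" by fact
    fix i
    show "(\<integral>x. e i x \<partial>M) = 0" by (rule mean)
    show "(\<integral>x. (e i x)\<^sup>2 \<partial>M) = 1"
      using standard_normal_distributed_variance[OF gauss[of i]] mean[of i] by simp
    have "integrable lborel (\<lambda>x. std_normal_density x * x ^ 2)"
      by (rule integrable_std_normal_moment)
    then show "square_integrable M (e i)"
      using distributed_integrable[OF gauss[of i], of "\<lambda>x. x ^ 2"] gauss[of i]
      by (auto simp: in_L2_def distributed_def)
  qed
qed

context indep_std_seq
begin

lemma e_measurable[measurable]: "e i \<in> borel_measurable M"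
  using square_integrable_e by (simp add: in_L2_def)

lemma e_integrable: "integrable M (e i)"
  by (rule square_integrable_integrable[OF square_integrable_e])

definition coord_events :: "int set \<Rightarrow> 'a set set" where
  "coord_events I = (\<Union>i\<in>I. {e i -` A \<inter> space M | A. A \<in> sets borel})"

definition sigma_e :: "int set \<Rightarrow> 'a measure" where
  "sigma_e I = sigma (space M) (coord_events I)"

lemma coord_events_Pow: "coord_events I \<subseteq> Pow (space M)"
  by (auto simp: coord_events_def)

lemma space_sigma_e[simp]: "space (sigma_e I) = space M"
  by (simp add: sigma_e_def coord_events_Pow)

lemma sets_sigma_e: "sets (sigma_e I) = sigma_sets (space M) (coord_events I)"
  by (simp add: sigma_e_def coord_events_Pow)

lemma nat_filtration_eq_sigma_e: "nat_filtration M e k = sigma_e {..k}"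
  unfolding nat_filtration_def sigma_e_def coord_events_def
  by (rule arg_cong[where f="sigma (space M)"]) auto

lemma e_measurable_sigma_e[measurable]: "i \<in> I \<Longrightarrow> e i \<in> borel_measurable (sigma_e I)"
  unfolding measurable_def
proof (intro CollectI conjI ballI)
  assume "i \<in> I"
  show "e i \<in> space (sigma_e I) \<rightarrow> space borel" by simp
  fix A :: "real set" assume "A \<in> sets borel"
  then have "e i -` A \<inter> space M \<in> coord_events I"
    using \<open>i \<in> I\<close> by (auto simp: coord_events_def)
  then show "e i -` A \<inter> space (sigma_e I) \<in> sets (sigma_e I)" by (simp add: sets_sigma_e)
qed

lemma sets_sigma_e_subset: "sets (sigma_e I) \<subseteq> sets M"
proof -
  have "coord_events I \<subseteq> sets M" by (auto simp: coord_events_def)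
  then show ?thesis unfolding sets_sigma_e by (metis sets.sigma_sets_subset)
qed

lemma measurable_sigma_e_imp: "f \<in> borel_measurable (sigma_e I) \<Longrightarrow> f \<in> borel_measurable M"
  using sets_sigma_e_subset unfolding measurable_def by auto

lemma measurable_sigma_e_mono:
  assumes "I \<subseteq> J" "f \<in> borel_measurable (sigma_e I)"
  shows "f \<in> borel_measurable (sigma_e J)"
proof -
  have "sets (sigma_e I) \<subseteq> sets (sigma_e J)"
    unfolding sets_sigma_e
    by (rule sigma_sets_subseteq) (use assms(1) in \<open>auto simp: coord_events_def\<close>)
  then show ?thesis using assms(2) unfolding measurable_def by auto
qed

lemma measurable_sigma_e_sum:
  assumes "\<And>j. j \<in> K \<Longrightarrow> \<phi> j \<in> I"
  shows "(\<lambda>x. \<Sum>j\<in>K. b j * e (\<phi> j) x) \<in> borel_measurable (sigma_e I)"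
  by (rule borel_measurable_sum) (use assms e_measurable_sigma_e in auto)

lemma indep_sigma_e:
  assumes "I \<inter> J = {}"
  shows "indep_set (sets (sigma_e I)) (sets (sigma_e J))"
proof -
  let ?E = "\<lambda>i. {e i -` A \<inter> space M | A. A \<in> sets borel}"
  let ?K = "case_bool I J"
  have "indep_sets (\<lambda>j. sigma_sets (space M) (\<Union>i\<in>?K j. ?E i)) UNIV"
  proof (rule indep_sets_collect_sigma)
    have "indep_sets ?E UNIV" using indep unfolding indep_vars_def2 by auto
    then show "indep_sets ?E (\<Union>j\<in>UNIV. ?K j)"
      by (rule indep_sets_mono_index[rotated]) auto
    show "Int_stable (?E i)" for i
      unfolding Int_stable_def
    proof (intro ballI)
      fix a b assume "a \<in> ?E i" "b \<in> ?E i"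
      then obtain A B where "a = e i -` A \<inter> space M" "A \<in> sets borel"
        "b = e i -` B \<inter> space M" "B \<in> sets borel" by blast
      then show "a \<inter> b \<in> ?E i"
        by (intro CollectI exI[of _ "A \<inter> B"]) auto
    qed
    show "disjoint_family_on ?K UNIV"
      using assms by (auto simp: disjoint_family_on_def split: bool.split)
  qed
  moreover have "(\<lambda>j. sigma_sets (space M) (\<Union>i\<in>?K j. ?E i))
      = case_bool (sets (sigma_e I)) (sets (sigma_e J))"
    by (rule ext) (simp add: sets_sigma_e coord_events_def split: bool.split)
  ultimately show ?thesis
    unfolding indep_set_def by simp
qed

lemma integral_mult_indep:
  fixes f g :: "'a \<Rightarrow> real"
  assumes IJ: "I \<inter> J = {}"
    and f: "f \<in> borel_measurable (sigma_e I)" and g: "g \<in> borel_measurable (sigma_e J)"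
    and "integrable M f" "integrable M g"
  shows "(\<integral>x. f x * g x \<partial>M) = (\<integral>x. f x \<partial>M) * (\<integral>x. g x \<partial>M)"
proof (rule indep_var_lebesgue_integral[OF _ assms(4,5)])
  have generated_sub: "sigma_sets (space M) {h -` A \<inter> space M | A. A \<in> sets borel} \<subseteq> sets (sigma_e K)"
    if "h \<in> borel_measurable (sigma_e K)" for h :: "'a \<Rightarrow> real" and K
    using that unfolding measurable_def
    by (intro sigma_algebra.sigma_sets_subset[OF sets.sigma_algebra_axioms[of "sigma_e K", simplified]])
       auto
  show "indep_var borel f borel g"
    unfolding indep_var_eq
  proof (intro conjI)
    show "random_variable borel f" "random_variable borel g"
      using f g measurable_sigma_e_imp by auto
    show "indep_set (sigma_sets (space M) {f -` A \<inter> space M |A. A \<in> sets borel})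
                    (sigma_sets (space M) {g -` A \<inter> space M |A. A \<in> sets borel})"
      using indep_sigma_e[OF IJ] unfolding indep_set_def
      by (rule indep_sets_mono_sets)
         (use generated_sub[OF f] generated_sub[OF g] in \<open>auto split: bool.split\<close>)
  qed
qed

lemma e_orthonormal: "(\<integral>x. e k x * e l x \<partial>M) = (if k = l then 1 else 0)"
proof (cases "k = l")
  case True
  then show ?thesis using e_second_moment[of k] by (simp add: power2_eq_square)
next
  case False
  have "(\<integral>x. e k x * e l x \<partial>M) = (\<integral>x. e k x \<partial>M) * (\<integral>x. e l x \<partial>M)"
    by (rule integral_mult_indep[of "{k}" "{l}"]) (use False e_integrable in auto)
  then show ?thesis using False e_mean by simp
qed

lemma square_integrable_sum_e: "finite K \<Longrightarrow> square_integrable M (\<lambda>x. \<Sum>j\<in>K. b j * e (\<phi> j) x)"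
  by (intro square_integrable_sum square_integrable_cmult square_integrable_e)

lemma integral_sq_sum_e:
  assumes "inj_on \<phi> K" "finite K"
  shows "(\<integral>x. (\<Sum>j\<in>K. b j * e (\<phi> j) x)\<^sup>2 \<partial>M) = (\<Sum>j\<in>K. (b j)\<^sup>2)"
proof -
  have "(\<lambda>x. (\<Sum>j\<in>K. b j * e (\<phi> j) x)\<^sup>2)
      = (\<lambda>x. \<Sum>i\<in>K. \<Sum>j\<in>K. (b i * b j) * (e (\<phi> i) x * e (\<phi> j) x))"
    by (auto simp: power2_eq_square sum_product algebra_simps)
  then have "(\<integral>x. (\<Sum>j\<in>K. b j * e (\<phi> j) x)\<^sup>2 \<partial>M)
      = (\<Sum>i\<in>K. \<Sum>j\<in>K. (b i * b j) * (\<integral>x. e (\<phi> i) x * e (\<phi> j) x \<partial>M))"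
    using square_integrable_mult[OF square_integrable_e square_integrable_e]
    by (simp add: Bochner_Integration.integral_sum integrable_sum)
  also have "\<dots> = (\<Sum>i\<in>K. \<Sum>j\<in>K. (b i * b j) * (if i = j then 1 else 0))"
    using assms(1) by (intro sum.cong refl) (auto simp: e_orthonormal inj_on_eq_iff)
  also have "\<dots> = (\<Sum>j\<in>K. (b j)\<^sup>2)"
    using assms(2)
    by (simp add: power2_eq_square if_distrib[of "\<lambda>x. _ * x"] sum.delta cong: if_cong)
  finally show ?thesis .
qed

end

section \<open>Kolmogorov's maximal inequality and convergence of random series\<close>

lemma first_passage:
  fixes S :: "nat \<Rightarrow> real"
  assumes "k \<le> n" "lam \<le> \<bar>S k\<bar>"
  obtains k0 where "k0 \<le> n" "lam \<le> \<bar>S k0\<bar>" "\<forall>j<k0. \<bar>S j\<bar> < lam"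
proof
  define k0 where "k0 = (LEAST k. lam \<le> \<bar>S k\<bar>)"
  show "lam \<le> \<bar>S k0\<bar>" unfolding k0_def by (rule LeastI[of _ k]) (rule assms(2))
  show "k0 \<le> n" using Least_le[of _ k] assms unfolding k0_def by fastforce
  show "\<forall>j<k0. \<bar>S j\<bar> < lam" unfolding k0_def using not_less_Least by fastforce
qed

lemma (in finite_measure) sq_lower_bound_on_set:
  assumes f: "square_integrable M f" and A: "A \<in> sets M"
    and large: "\<And>x. x \<in> A \<Longrightarrow> lam \<le> \<bar>f x\<bar>" and lam: "0 \<le> lam"
  shows "lam\<^sup>2 * measure M A \<le> (\<integral>x. (f x)\<^sup>2 * indicator A x \<partial>M)"
proof -
  have "lam\<^sup>2 * measure M A = (\<integral>x. lam\<^sup>2 * indicator A x \<partial>M)"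
    using sets.sets_into_space[OF A] by (simp add: Int_absorb2)
  also have "\<dots> \<le> (\<integral>x. (f x)\<^sup>2 * indicator A x \<partial>M)"
  proof (rule integral_mono)
    show "integrable M (\<lambda>x. lam\<^sup>2 * indicator A x)"
      using A by (intro integrable_mult_right integrable_real_indicator) (auto simp: emeasure_eq_measure)
    show "integrable M (\<lambda>x. (f x)\<^sup>2 * indicator A x)"
      using f A by (intro integrable_real_mult_indicator) (auto simp: in_L2_def)
    show "lam\<^sup>2 * indicator A x \<le> (f x)\<^sup>2 * indicator A x" for x
      using large[of x] lam abs_le_square_iff[of lam "f x"] by (auto simp: indicator_def)
  qed
  finally show ?thesis .
qed

lemma integral_disjoint_indicator_le:
  fixes f :: "'a \<Rightarrow> real"
  assumes f: "integrable M f" "\<And>x. x \<in> space M \<Longrightarrow> 0 \<le> f x"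
    and I: "finite I" and disj: "disjoint_family_on A I" and A: "\<And>i. i \<in> I \<Longrightarrow> A i \<in> sets M"
  shows "(\<Sum>i\<in>I. \<integral>x. f x * indicator (A i) x \<partial>M) \<le> (\<integral>x. f x \<partial>M)"
proof -
  have "(\<Sum>i\<in>I. \<integral>x. f x * indicator (A i) x \<partial>M) = (\<integral>x. (\<Sum>i\<in>I. f x * indicator (A i) x) \<partial>M)"
    using f A by (intro Bochner_Integration.integral_sum[symmetric] integrable_real_mult_indicator)
  also have "\<dots> = (\<integral>x. f x * indicator (\<Union>i\<in>I. A i) x \<partial>M)"
    by (simp only: indicator_UN_disjoint[OF I disj] sum_distrib_left)
  also have "\<dots> \<le> (\<integral>x. f x \<partial>M)"
    using f A I by (intro integral_mono integrable_real_mult_indicator) (auto simp: indicator_def)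
  finally show ?thesis .
qed

lemma summable_if_small_tails:
  fixes f :: "nat \<Rightarrow> real"
  assumes small: "\<And>eps. 0 < eps \<Longrightarrow> \<exists>N. \<forall>k. \<bar>\<Sum>j<k. f (j + N)\<bar> < eps"
  shows "summable f"
  unfolding summable_Cauchy
proof (intro allI impI)
  fix r :: real assume r: "0 < r"
  obtain N where N: "\<forall>k. \<bar>\<Sum>j<k. f (j + N)\<bar> < r / 2" using small[of "r / 2"] r by auto
  have tail: "\<bar>sum f {N..<n}\<bar> < r / 2" if "N \<le> n" for n
  proof -
    have "sum f {N..<n} = (\<Sum>j<n - N. f (j + N))"
      using that sum.shift_bounds_nat_ivl[of f 0 N "n - N"] by (simp add: lessThan_atLeast0)
    then show ?thesis using N by simp
  qed
  show "\<exists>N. \<forall>m\<ge>N. \<forall>n. norm (sum f {m..<n}) < r"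
  proof (intro exI allI impI)
    fix m n assume m: "N \<le> m"
    show "norm (sum f {m..<n}) < r"
    proof (cases "m \<le> n")
      case True
      then have "sum f {N..<n} = sum f {N..<m} + sum f {m..<n}"
        using m by (simp add: sum.atLeastLessThan_concat)
      then have "\<bar>sum f {m..<n}\<bar> \<le> \<bar>sum f {N..<n}\<bar> + \<bar>sum f {N..<m}\<bar>" by linarith
      then show ?thesis using tail[of n] tail[of m] True m by simp
    qed (use r in simp)
  qed
qed

context indep_std_seq
begin

(* A square-integrable function of the first k terms of sum_j b_j e_(phi j) is orthogonal to
   every combination of the later terms, which are independent of it and centred. *)
lemma orthogonal_later_terms:
  fixes \<phi> :: "nat \<Rightarrow> int" and b :: "nat \<Rightarrow> real"
  assumes inj: "inj \<phi>" and g: "square_integrable M g"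
    and g_meas: "g \<in> borel_measurable (sigma_e (\<phi> ` {..<k}))"
    and K: "finite K" "\<And>j. j \<in> K \<Longrightarrow> k \<le> j"
  shows "(\<integral>x. g x * (\<Sum>j\<in>K. b j * e (\<phi> j) x) \<partial>M) = 0"
proof -
  have g_e: "(\<integral>x. g x * e (\<phi> j) x \<partial>M) = 0" if "j \<in> K" for j
  proof -
    have "(\<integral>x. g x * e (\<phi> j) x \<partial>M) = (\<integral>x. g x \<partial>M) * (\<integral>x. e (\<phi> j) x \<partial>M)"
      by (rule integral_mult_indep[of "\<phi> ` {..<k}" "{\<phi> j}"])
         (use K(2)[OF that] inj g_meas e_measurable_sigma_e[of "\<phi> j" "{\<phi> j}"]
            square_integrable_integrable[OF g] e_integrable in \<open>auto simp: inj_eq\<close>)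
    then show ?thesis by (simp add: e_mean)
  qed
  have "(\<lambda>x. g x * (\<Sum>j\<in>K. b j * e (\<phi> j) x)) = (\<lambda>x. \<Sum>j\<in>K. b j * (g x * e (\<phi> j) x))"
    by (auto simp: sum_distrib_left algebra_simps)
  then have "(\<integral>x. g x * (\<Sum>j\<in>K. b j * e (\<phi> j) x) \<partial>M) = (\<Sum>j\<in>K. b j * (\<integral>x. g x * e (\<phi> j) x \<partial>M))"
    using square_integrable_mult[OF g square_integrable_e]
    by (simp add: Bochner_Integration.integral_sum integrable_sum)
  then show ?thesis using g_e by simp
qed

(* The orthogonality behind Kolmogorov's inequality: on an event A determined by the first k
   terms, adding the later terms can only increase the second moment. *)
lemma sq_partial_sum_indicator_mono:
  fixes \<phi> :: "nat \<Rightarrow> int" and b :: "nat \<Rightarrow> real"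
  assumes inj: "inj \<phi>" and kn: "k \<le> n" and A: "A \<in> sets (sigma_e (\<phi> ` {..<k}))"
  shows "(\<integral>x. (\<Sum>j<k. b j * e (\<phi> j) x)\<^sup>2 * indicator A x \<partial>M)
       \<le> (\<integral>x. (\<Sum>j<n. b j * e (\<phi> j) x)\<^sup>2 * indicator A x \<partial>M)"
proof -
  define S where "S x = (\<Sum>j<k. b j * e (\<phi> j) x)" for x
  define D where "D x = (\<Sum>j\<in>{k..<n}. b j * e (\<phi> j) x)" for x
  define g where "g x = S x * indicator A x" for x
  have A_sets: "A \<in> sets M" using subsetD[OF sets_sigma_e_subset A] .
  have sq_S: "square_integrable M S"
    unfolding S_def by (rule square_integrable_sum_e[OF finite_lessThan])
  have sq_D: "square_integrable M D"
    unfolding D_def by (rule square_integrable_sum_e[OF finite_atLeastLessThan])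
  have sq_g: "square_integrable M g"
    unfolding g_def by (rule square_integrable_indicator[OF sq_S A_sets])
  have g_D: "(\<integral>x. g x * D x \<partial>M) = 0"
    unfolding D_def
  proof (rule orthogonal_later_terms[OF inj sq_g])
    show "g \<in> borel_measurable (sigma_e (\<phi> ` {..<k}))"
      unfolding g_def S_def using A measurable_sigma_e_sum[of "{..<k}" \<phi> "\<phi> ` {..<k}" b]
      by simp
  qed auto
  have split: "(\<Sum>j<n. b j * e (\<phi> j) x)\<^sup>2 * indicator A x
      = (S x)\<^sup>2 * indicator A x + 2 * (g x * D x) + (D x * indicator A x)\<^sup>2" for x
  proof -
    have "(\<Sum>j<n. b j * e (\<phi> j) x) = S x + D x"
      unfolding S_def D_def using kn
      by (simp add: atLeast0LessThan[symmetric] sum.atLeastLessThan_concat)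
    then show ?thesis unfolding g_def by (auto simp: indicator_def power2_eq_square algebra_simps)
  qed
  have "(\<integral>x. (\<Sum>j<n. b j * e (\<phi> j) x)\<^sup>2 * indicator A x \<partial>M)
      = (\<integral>x. (S x)\<^sup>2 * indicator A x \<partial>M) + 2 * (\<integral>x. g x * D x \<partial>M)
        + (\<integral>x. (D x * indicator A x)\<^sup>2 \<partial>M)"
    unfolding split
    using sq_S sq_D square_integrable_mult[OF sq_g sq_D]
      square_integrable_indicator[OF sq_D A_sets] A_sets
    by (simp add: in_L2_def integrable_real_mult_indicator)
  moreover have "0 \<le> (\<integral>x. (D x * indicator A x)\<^sup>2 \<partial>M)" by simp
  ultimately show ?thesis using g_D unfolding S_def by simp
qed

lemma kolmogorov_maximal_inequality:
  fixes \<phi> :: "nat \<Rightarrow> int" and b :: "nat \<Rightarrow> real" and lam :: real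
  assumes inj: "inj \<phi>" and lam: "0 < lam"
  shows "prob {x\<in>space M. \<exists>k\<le>n. lam \<le> \<bar>\<Sum>j<k. b j * e (\<phi> j) x\<bar>} \<le> (\<Sum>j<n. (b j)\<^sup>2) / lam\<^sup>2"
proof -
  define S where "S k x = (\<Sum>j<k. b j * e (\<phi> j) x)" for k x
  define A where "A k = {x\<in>space M. lam \<le> \<bar>S k x\<bar> \<and> (\<forall>j<k. \<bar>S j x\<bar> < lam)}" for k
  have A_sigma: "A k \<in> sets (sigma_e (\<phi> ` {..<k}))" for k
  proof -
    have [measurable]: "S (min j k) \<in> borel_measurable (sigma_e (\<phi> ` {..<k}))" for j
      unfolding S_def by (rule measurable_sigma_e_sum) auto
    have "{x\<in>space (sigma_e (\<phi> ` {..<k})). lam \<le> \<bar>S (min k k) x\<bar> \<and> (\<forall>j<k. \<bar>S (min j k) x\<bar> < lam)}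
        \<in> sets (sigma_e (\<phi> ` {..<k}))"
      by measurable
    moreover have "{x\<in>space (sigma_e (\<phi> ` {..<k})). lam \<le> \<bar>S (min k k) x\<bar> \<and> (\<forall>j<k. \<bar>S (min j k) x\<bar> < lam)}
        = A k"
      unfolding A_def by auto
    ultimately show ?thesis by simp
  qed
  have A_sets: "A k \<in> sets M" for k using subsetD[OF sets_sigma_e_subset A_sigma] .
  have sq_S: "square_integrable M (S k)" for k unfolding S_def by (rule square_integrable_sum_e) simp
  have disj: "disjoint_family_on A {..n}"
    unfolding disjoint_family_on_def A_def by (auto, metis linorder_neqE_nat not_less)
  have cover: "{x\<in>space M. \<exists>k\<le>n. lam \<le> \<bar>S k x\<bar>} \<subseteq> (\<Union>k\<le>n. A k)"
  proof clarify
    fix x k assume x: "x \<in> space M" and kn: "k \<le> n" and reach: "lam \<le> \<bar>S k x\<bar>"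
    obtain k0 where "k0 \<le> n" "lam \<le> \<bar>S k0 x\<bar>" "\<forall>j<k0. \<bar>S j x\<bar> < lam"
      using first_passage[of k n lam "\<lambda>j. S j x", OF kn reach] by blast
    then show "x \<in> (\<Union>k\<le>n. A k)" using x unfolding A_def by auto
  qed
  have "lam\<^sup>2 * prob {x\<in>space M. \<exists>k\<le>n. lam \<le> \<bar>S k x\<bar>} \<le> lam\<^sup>2 * prob (\<Union>k\<le>n. A k)"
    using cover A_sets by (intro mult_left_mono finite_measure_mono) auto
  also have "\<dots> \<le> lam\<^sup>2 * (\<Sum>k\<le>n. prob (A k))"
    using A_sets by (intro mult_left_mono measure_UNION_le) auto
  also have "\<dots> \<le> (\<Sum>k\<le>n. \<integral>x. (S k x)\<^sup>2 * indicator (A k) x \<partial>M)"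
    unfolding sum_distrib_left
    using sq_S A_sets lam by (intro sum_mono sq_lower_bound_on_set) (auto simp: A_def)
  also have "\<dots> \<le> (\<Sum>k\<le>n. \<integral>x. (S n x)\<^sup>2 * indicator (A k) x \<partial>M)"
    unfolding S_def by (intro sum_mono sq_partial_sum_indicator_mono[OF inj] A_sigma) auto
  also have "\<dots> \<le> (\<integral>x. (S n x)\<^sup>2 \<partial>M)"
    using sq_S A_sets disj by (intro integral_disjoint_indicator_le) (auto simp: in_L2_def)
  also have "\<dots> = (\<Sum>j<n. (b j)\<^sup>2)"
    unfolding S_def by (rule integral_sq_sum_e) (use inj in \<open>auto intro: inj_on_subset\<close>)
  finally show ?thesis unfolding S_def using lam by (simp add: field_simps)
qed

(* Almost surely, the tails of sum_j b_j e_(phi j) eventually stay below eps: the probability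
   that some tail partial sum from M0 on exceeds eps is bounded by sum_{j>=M0} b_j^2 / eps^2. *)
lemma AE_small_tails:
  fixes \<phi> :: "nat \<Rightarrow> int" and b :: "nat \<Rightarrow> real" and eps :: real
  assumes inj: "inj \<phi>" and bs: "summable (\<lambda>j. (b j)\<^sup>2)" and eps: "0 < eps"
  shows "AE x in M. \<exists>M0. \<forall>k. \<bar>\<Sum>j<k. b (j + M0) * e (\<phi> (j + M0)) x\<bar> < eps"
proof -
  define E where
    "E M0 n = {x\<in>space M. \<exists>k\<le>n. eps \<le> \<bar>\<Sum>j<k. b (j + M0) * e (\<phi> (j + M0)) x\<bar>}" for M0 n
  have E_sets[measurable]: "E M0 n \<in> sets M" for M0 n unfolding E_def by measurable
  define tail where "tail M0 = (\<Sum>j. (b (j + M0))\<^sup>2)" for M0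
  have E_prob: "prob (E M0 n) \<le> tail M0 / eps\<^sup>2" for M0 n
  proof -
    have "inj (\<lambda>j. \<phi> (j + M0))" using inj unfolding inj_def by (metis add_right_cancel)
    then have "prob (E M0 n) \<le> (\<Sum>j<n. (b (j + M0))\<^sup>2) / eps\<^sup>2"
      unfolding E_def using kolmogorov_maximal_inequality[OF _ eps, where b="\<lambda>j. b (j + M0)"]
      by simp
    also have "\<dots> \<le> tail M0 / eps\<^sup>2"
      unfolding tail_def
      by (intro divide_right_mono sum_le_suminf summable_ignore_initial_segment[OF bs]) auto
    finally show ?thesis .
  qed
  define N where "N = (\<Inter>M0. \<Union>n. E M0 n)"
  have N_sets: "N \<in> sets M" unfolding N_def by auto
  have N_prob: "prob N \<le> tail M0 / eps\<^sup>2" for M0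
  proof -
    have "incseq (E M0)" unfolding incseq_def E_def by (auto intro: le_trans)
    then have "(\<lambda>n. prob (E M0 n)) \<longlonglongrightarrow> prob (\<Union>n. E M0 n)"
      by (intro finite_Lim_measure_incseq) auto
    then have "prob (\<Union>n. E M0 n) \<le> tail M0 / eps\<^sup>2"
      by (rule LIMSEQ_le_const2) (use E_prob in auto)
    moreover have "prob N \<le> prob (\<Union>n. E M0 n)"
      by (rule finite_measure_mono) (auto simp: N_def)
    ultimately show ?thesis by linarith
  qed
  have "(\<lambda>M0. tail M0 / eps\<^sup>2) \<longlonglongrightarrow> 0"
    unfolding tail_def using suminf_exist_split2[OF bs] by (rule tendsto_divide_zero)
  then have "prob N \<le> 0"
    by (rule LIMSEQ_le_const) (use N_prob in auto)
  then have "N \<in> null_sets M"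
    using N_sets measure_nonneg[of M N] by (simp add: null_sets_def emeasure_eq_measure)
  then show ?thesis
    by (rule AE_I') (auto simp: N_def E_def not_less; blast)
qed

lemma AE_summable:
  fixes \<phi> :: "nat \<Rightarrow> int" and b :: "nat \<Rightarrow> real"
  assumes inj: "inj \<phi>" and bs: "summable (\<lambda>j. (b j)\<^sup>2)"
  shows "AE x in M. summable (\<lambda>j. b j * e (\<phi> j) x)"
proof -
  have "AE x in M. \<forall>p::nat. \<exists>M0. \<forall>k. \<bar>\<Sum>j<k. b (j + M0) * e (\<phi> (j + M0)) x\<bar> < 1 / Suc p"
    unfolding AE_all_countable by (intro allI AE_small_tails[OF inj bs]) simp
  then show ?thesis
  proof (rule AE_mp, intro AE_I2 impI summable_if_small_tails)
    fix x and eps :: real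
    assume small: "\<forall>p::nat. \<exists>M0. \<forall>k. \<bar>\<Sum>j<k. b (j + M0) * e (\<phi> (j + M0)) x\<bar> < 1 / Suc p"
      and eps: "0 < eps"
    obtain p :: nat where "1 / eps < real p" using reals_Archimedean2 by blast
    then have "1 / Suc p < eps" using eps by (simp add: field_simps)
    then show "\<exists>N. \<forall>k. \<bar>\<Sum>j<k. b (j + N) * e (\<phi> (j + N)) x\<bar> < eps"
      using small by (meson less_trans)
  qed
qed

lemma series_L2_tail:
  fixes \<phi> :: "nat \<Rightarrow> int" and b :: "nat \<Rightarrow> real"
  assumes inj: "inj \<phi>" and bs: "summable (\<lambda>j. (b j)\<^sup>2)"
  shows "square_integrable M (\<lambda>x. (\<Sum>j. b j * e (\<phi> j) x) - (\<Sum>j<N. b j * e (\<phi> j) x))"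
    and "(\<integral>x. ((\<Sum>j. b j * e (\<phi> j) x) - (\<Sum>j<N. b j * e (\<phi> j) x))\<^sup>2 \<partial>M) \<le> (\<Sum>j. (b (j + N))\<^sup>2)"
proof -
  define S where "S n x = (\<Sum>j<n. b j * e (\<phi> j) x)" for n x
  have conv: "AE x in M. (\<lambda>n. S n x - S N x) \<longlonglongrightarrow> (\<Sum>j. b j * e (\<phi> j) x) - S N x"
    using AE_summable[OF inj bs]
    by (rule AE_mp) (auto simp: S_def intro!: AE_I2 tendsto_diff summable_LIMSEQ)
  have bound: "integrable M (\<lambda>x. (S n x - S N x)\<^sup>2) \<and> (\<integral>x. (S n x - S N x)\<^sup>2 \<partial>M) \<le> (\<Sum>j. (b (j + N))\<^sup>2)"
    if "N \<le> n" for n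
  proof
    have incr: "S n x - S N x = (\<Sum>j\<in>{N..<n}. b j * e (\<phi> j) x)" for x
      unfolding S_def using that
      by (simp add: lessThan_atLeast0 sum.atLeastLessThan_concat[symmetric, of 0 N n])
    show "integrable M (\<lambda>x. (S n x - S N x)\<^sup>2)"
      using square_integrable_sum_e[of "{N..<n}" b \<phi>] unfolding incr in_L2_def by simp
    have "(\<integral>x. (S n x - S N x)\<^sup>2 \<partial>M) = (\<Sum>j\<in>{N..<n}. (b j)\<^sup>2)"
      unfolding incr by (rule integral_sq_sum_e) (use inj in \<open>auto intro: inj_on_subset\<close>)
    also have "\<dots> = (\<Sum>j<n - N. (b (j + N))\<^sup>2)"
      using that sum.shift_bounds_nat_ivl[of "\<lambda>j. (b j)\<^sup>2" 0 N "n - N"]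
      by (simp add: lessThan_atLeast0)
    also have "\<dots> \<le> (\<Sum>j. (b (j + N))\<^sup>2)"
      by (intro sum_le_suminf summable_ignore_initial_segment[OF bs]) auto
    finally show "(\<integral>x. (S n x - S N x)\<^sup>2 \<partial>M) \<le> (\<Sum>j. (b (j + N))\<^sup>2)" .
  qed
  show "square_integrable M (\<lambda>x. (\<Sum>j. b j * e (\<phi> j) x) - (\<Sum>j<N. b j * e (\<phi> j) x))"
    and "(\<integral>x. ((\<Sum>j. b j * e (\<phi> j) x) - (\<Sum>j<N. b j * e (\<phi> j) x))\<^sup>2 \<partial>M) \<le> (\<Sum>j. (b (j + N))\<^sup>2)"
    using square_integrable_Fatou[OF conv _ _ bound] unfolding S_def by (auto simp: S_def)
qed

lemma square_integrable_series:
  fixes \<phi> :: "nat \<Rightarrow> int" and b :: "nat \<Rightarrow> real"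
  assumes "inj \<phi>" "summable (\<lambda>j. (b j)\<^sup>2)"
  shows "square_integrable M (\<lambda>x. \<Sum>j. b j * e (\<phi> j) x)"
  using series_L2_tail(1)[OF assms, of 0] by simp

(* A function orthogonal to every e_(phi j) is orthogonal to the series, by continuity of the
   inner product along the L^2-convergent partial sums. *)
lemma series_orthogonal:
  fixes \<phi> :: "nat \<Rightarrow> int" and b :: "nat \<Rightarrow> real"
  assumes inj: "inj \<phi>" and bs: "summable (\<lambda>j. (b j)\<^sup>2)"
    and h: "square_integrable M h" and orth: "\<And>j. (\<integral>x. e (\<phi> j) x * h x \<partial>M) = 0"
  shows "(\<integral>x. (\<Sum>j. b j * e (\<phi> j) x) * h x \<partial>M) = 0"
proof -
  define Z where "Z x = (\<Sum>j. b j * e (\<phi> j) x)" for x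
  define S where "S N x = (\<Sum>j<N. b j * e (\<phi> j) x)" for N x
  define H where "H = (\<integral>x. (h x)\<^sup>2 \<partial>M)"
  have sq_diff: "square_integrable M (\<lambda>x. Z x - S N x)" for N
    unfolding Z_def S_def by (rule series_L2_tail(1)[OF inj bs])
  have Zh: "(\<integral>x. Z x * h x \<partial>M) = (\<integral>x. (Z x - S N x) * h x \<partial>M)" for N
  proof -
    have "(\<lambda>x. Z x * h x) = (\<lambda>x. (Z x - S N x) * h x + (\<Sum>j<N. b j * (e (\<phi> j) x * h x)))"
      unfolding S_def by (rule ext) (simp add: algebra_simps sum_distrib_left)
    then have "(\<integral>x. Z x * h x \<partial>M)
        = (\<integral>x. (Z x - S N x) * h x \<partial>M) + (\<Sum>j<N. b j * (\<integral>x. e (\<phi> j) x * h x \<partial>M))"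
      using square_integrable_mult[OF sq_diff h] square_integrable_mult[OF square_integrable_e h]
      by (simp add: Bochner_Integration.integral_sum integrable_sum)
    then show ?thesis using orth by simp
  qed
  have small: "\<bar>\<integral>x. Z x * h x \<partial>M\<bar> \<le> eps" if eps: "0 < eps" for eps
  proof -
    define t where "t = H / eps + 1"
    have H: "0 \<le> H" unfolding H_def by simp
    then have t: "0 < t" and Ht: "H / t \<le> eps"
      using eps unfolding t_def by (simp_all add: add_nonneg_pos field_simps)
    obtain N where "\<forall>n\<ge>N. norm (\<Sum>i. (b (i + n))\<^sup>2) < eps / t"
      using suminf_exist_split[OF _ bs] eps t by (metis divide_pos_pos)
    then have "(\<Sum>i. (b (i + N))\<^sup>2) < eps / t" by auto
    then have tail: "t * (\<Sum>i. (b (i + N))\<^sup>2) \<le> eps" using t by (simp add: field_simps)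
    have "\<bar>\<integral>x. Z x * h x \<partial>M\<bar> \<le> (t * (\<integral>x. (Z x - S N x)\<^sup>2 \<partial>M) + H / t) / 2"
      unfolding Zh[of N] H_def by (rule abs_integral_mult_le[OF sq_diff h t])
    also have "\<dots> \<le> (t * (\<Sum>i. (b (i + N))\<^sup>2) + H / t) / 2"
      using series_L2_tail(2)[OF inj bs, of N] t unfolding Z_def S_def by simp
    finally show ?thesis using tail Ht by simp
  qed
  have "\<bar>\<integral>x. Z x * h x \<partial>M\<bar> \<le> 0"
    using small by (metis dense not_le)
  then show ?thesis unfolding Z_def by simp
qed

end

section \<open>The setting of the theorem\<close>

locale innovation_model = indep_std_seq M e for M :: "'a measure" and e +
  fixes T :: "'a \<Rightarrow> 'a" and a :: "nat \<Rightarrow> real" and m :: "'a \<Rightarrow> real"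
    and X :: "int \<Rightarrow> 'a \<Rightarrow> real"
  assumes T_mp: "measure_preserving M T"
    and T_bij: "bij_betw T (space M) (space M)"
    and Tinv_mp: "measure_preserving M (the_inv_into (space M) T)"
    and shift: "\<And>i x. x \<in> space M \<Longrightarrow> e i (T x) = e (i + 1) x"
    and a_sq: "summable (\<lambda>i. (a i)\<^sup>2)"
    and X_def: "\<And>n x. X n x = (\<Sum>i. a i * e (n - int i) x)"
    and m_L2: "in_L2 M (nat_filtration M e 0) m"
    and m_orth: "\<And>g. in_L2 M (nat_filtration M e (-1)) g \<Longrightarrow> (\<integral>x. m x * g x \<partial>M) = 0"
begin

definition Tinv :: "'a \<Rightarrow> 'a" where
  "Tinv = the_inv_into (space M) T"

lemma Tinv_space: "x \<in> space M \<Longrightarrow> Tinv x \<in> space M"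
  using bij_betw_the_inv_into[OF T_bij] unfolding Tinv_def by (auto simp: bij_betw_def)

lemma T_Tinv: "x \<in> space M \<Longrightarrow> T (Tinv x) = x"
  unfolding Tinv_def by (rule f_the_inv_into_f_bij_betw[OF T_bij])

lemma funpow_T_Tinv: "x \<in> space M \<Longrightarrow> (T ^^ n) ((Tinv ^^ n) x) = x"
proof (induction n arbitrary: x)
  case (Suc n)
  have Tinv_n: "(Tinv ^^ n) x \<in> space M"
    using Suc.prems by (induction n) (auto simp: Tinv_space)
  have "(T ^^ Suc n) ((Tinv ^^ Suc n) x) = (T ^^ n) (T (Tinv ((Tinv ^^ n) x)))"
    by (simp add: funpow_swap1)
  also have "\<dots> = x" using Suc Tinv_n by (simp add: T_Tinv)
  finally show ?case .
qed simp

lemma e_funpow_T: "x \<in> space M \<Longrightarrow> e k ((T ^^ n) x) = e (k + int n) x"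
proof (induction n arbitrary: k)
  case (Suc n)
  have T_n: "(T ^^ n) x \<in> space M"
    using Suc.prems T_bij by (induction n) (auto simp: bij_betw_def)
  have "e k ((T ^^ Suc n) x) = e (k + 1) ((T ^^ n) x)" using T_n by (simp add: shift)
  also have "\<dots> = e (k + int (Suc n)) x" using Suc by (simp add: algebra_simps)
  finally show ?case .
qed simp

lemma Tinv_measurable_sigma_e: "Tinv \<in> measurable (sigma_e {..k}) (sigma_e {..k + 1})"
  unfolding sigma_e_def[of "{..k+1}"]
proof (rule measurable_measure_of)
  show "coord_events {..k + 1} \<subseteq> Pow (space M)" by (rule coord_events_Pow)
  show "Tinv \<in> space (sigma_e {..k}) \<rightarrow> space M" using Tinv_space by auto
  fix y assume "y \<in> coord_events {..k + 1}"
  then obtain i A where y: "y = e i -` A \<inter> space M" "i \<le> k + 1" "A \<in> sets borel"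
    by (auto simp: coord_events_def)
  have "e i (Tinv x) = e (i - 1) x" if "x \<in> space M" for x
    using shift[of "Tinv x" "i - 1"] that by (simp add: Tinv_space T_Tinv)
  then have "Tinv -` y \<inter> space (sigma_e {..k}) = e (i - 1) -` A \<inter> space M"
    using y by (auto simp: Tinv_space)
  also have "\<dots> \<in> coord_events {..k}" using y unfolding coord_events_def by force
  finally show "Tinv -` y \<inter> space (sigma_e {..k}) \<in> sets (sigma_e {..k})"
    by (simp add: sets_sigma_e)
qed

lemma funpow_Tinv_measurable_sigma_e:
  "Tinv ^^ n \<in> measurable (sigma_e {..k}) (sigma_e {..k + int n})"
proof (induction n arbitrary: k)
  case 0
  then show ?case by (simp add: id_def)
next
  case (Suc n)
  have "Tinv ^^ Suc n = (Tinv ^^ n) \<circ> Tinv" by (rule funpow_Suc_right)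
  then have "Tinv ^^ Suc n \<in> measurable (sigma_e {..k}) (sigma_e {..k + 1 + int n})"
    using Tinv_measurable_sigma_e[of k] Suc.IH[of "k + 1"] by (auto intro: measurable_comp)
  moreover have "k + int (Suc n) = k + 1 + int n" by simp
  ultimately show ?case by (simp only:)
qed

lemma m_measurable_F0: "m \<in> borel_measurable (sigma_e {..0})"
  using m_L2 by (simp add: in_L2_def nat_filtration_eq_sigma_e)

lemma square_integrable_m: "square_integrable M m"
  using m_L2 m_measurable_F0 measurable_sigma_e_imp by (simp add: in_L2_def)

definition c :: real where
  "c = (\<integral>x. m x * e 0 x \<partial>M)"

definition r :: "'a \<Rightarrow> real" where
  "r x = m x - c * e 0 x"

lemma r_measurable_F0: "r \<in> borel_measurable (sigma_e {..0})"
  unfolding r_def using m_measurable_F0 e_measurable_sigma_e[of 0 "{..0}"] by simp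

lemma square_integrable_r: "square_integrable M r"
  unfolding r_def by (intro square_integrable_diff square_integrable_m square_integrable_cmult
      square_integrable_e)

(* r inherits the orthogonality of m to L^2(F_{-1}), since e_0 is independent of F_{-1}. *)
lemma r_orth_past:
  assumes g: "g \<in> borel_measurable (sigma_e {..-1})" "integrable M (\<lambda>x. (g x)\<^sup>2)"
  shows "(\<integral>x. r x * g x \<partial>M) = 0"
proof -
  have sq_g: "square_integrable M g" using g measurable_sigma_e_imp by (simp add: in_L2_def)
  have "(\<integral>x. m x * g x \<partial>M) = 0"
    by (rule m_orth) (use g in \<open>simp add: in_L2_def nat_filtration_eq_sigma_e\<close>)
  moreover have "(\<integral>x. e 0 x * g x \<partial>M) = (\<integral>x. e 0 x \<partial>M) * (\<integral>x. g x \<partial>M)"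
    by (rule integral_mult_indep[of "{0}" "{..-1}"])
       (use g e_integrable square_integrable_integrable[OF sq_g] in auto)
  moreover have "(\<integral>x. r x * g x \<partial>M) = (\<integral>x. m x * g x \<partial>M) - c * (\<integral>x. e 0 x * g x \<partial>M)"
  proof -
    have "(\<lambda>x. r x * g x) = (\<lambda>x. m x * g x - c * (e 0 x * g x))"
      by (auto simp: r_def algebra_simps)
    then show ?thesis
      using square_integrable_mult[OF square_integrable_m sq_g]
        square_integrable_mult[OF square_integrable_e sq_g]
      by (simp add: Bochner_Integration.integral_diff)
  qed
  ultimately show ?thesis using e_mean by simp
qed

(* r is orthogonal to every coordinate: the past by hypothesis, e_0 by the choice of c,
   the future by independence. *)
lemma e_orth_r: "(\<integral>x. e l x * r x \<partial>M) = 0"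
proof -
  have split: "(\<integral>x. e l x * r x \<partial>M) = (\<integral>x. e l x * m x \<partial>M) - c * (\<integral>x. e l x * e 0 x \<partial>M)"
  proof -
    have "(\<lambda>x. e l x * r x) = (\<lambda>x. e l x * m x - c * (e l x * e 0 x))"
      by (auto simp: r_def algebra_simps)
    then show ?thesis
      using square_integrable_mult[OF square_integrable_e square_integrable_m]
        square_integrable_mult[OF square_integrable_e square_integrable_e]
      by (simp add: Bochner_Integration.integral_diff)
  qed
  consider "l \<le> -1" | "l = 0" | "l \<ge> 1" by linarith
  then show ?thesis
  proof cases
    case 1
    have "(\<integral>x. r x * e l x \<partial>M) = 0"
      by (rule r_orth_past)
         (use 1 e_measurable_sigma_e[of l "{..-1}"] square_integrable_e in \<open>auto simp: in_L2_def\<close>)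
    then show ?thesis by (simp add: mult.commute)
  next
    case 2
    then show ?thesis using split e_orthonormal[of 0 0] unfolding c_def by (simp add: mult.commute)
  next
    case 3
    have "(\<integral>x. e l x * m x \<partial>M) = (\<integral>x. e l x \<partial>M) * (\<integral>x. m x \<partial>M)"
      by (rule integral_mult_indep[of "{l}" "{..0}"])
         (use 3 m_measurable_F0 e_integrable square_integrable_integrable[OF square_integrable_m]
           in auto)
    then show ?thesis using split e_orthonormal[of l 0] 3 e_mean by simp
  qed
qed

lemma square_integrable_r_funpow: "square_integrable M (\<lambda>x. r ((T ^^ j) x))"
  by (rule measure_preserving_square_integrable[OF measure_preserving_funpow[OF T_mp]
        square_integrable_r])

(* By stationarity, every shifted residual is orthogonal to every coordinate. *)
lemma e_orth_r_funpow: "(\<integral>x. e k x * r ((T ^^ j) x) \<partial>M) = 0"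
proof -
  have "(\<integral>x. e k x * r ((T ^^ j) x) \<partial>M) = (\<integral>x. e (k - int j) ((T ^^ j) x) * r ((T ^^ j) x) \<partial>M)"
    by (rule Bochner_Integration.integral_cong) (auto simp: e_funpow_T)
  also have "\<dots> = (\<integral>x. e (k - int j) x * r x \<partial>M)"
    by (rule measure_preserving_integral[OF measure_preserving_funpow[OF T_mp]
          borel_measurable_integrable[OF square_integrable_mult[OF square_integrable_e
          square_integrable_r]]])
  also have "\<dots> = 0" by (rule e_orth_r)
  finally show ?thesis .
qed

(* r is a martingale difference: it is orthogonal to its shifted copies r o T^d, d >= 1,
   because r o T^{-d} is F_{-1}-measurable. *)
lemma r_orth_shift: "d \<ge> 1 \<Longrightarrow> (\<integral>x. r x * r ((T ^^ d) x) \<partial>M) = 0"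
proof -
  assume d: "d \<ge> 1"
  have Tinv_d: "measure_preserving M (Tinv ^^ d)"
    by (rule measure_preserving_funpow) (use Tinv_mp in \<open>simp add: Tinv_def\<close>)
  have sq_r_Tinv: "square_integrable M (\<lambda>x. r ((Tinv ^^ d) x))"
    by (rule measure_preserving_square_integrable[OF Tinv_d square_integrable_r])
  have "(\<integral>x. r x * r ((T ^^ d) x) \<partial>M) = (\<integral>x. r ((Tinv ^^ d) x) * r ((T ^^ d) ((Tinv ^^ d) x)) \<partial>M)"
    by (rule measure_preserving_integral[OF Tinv_d borel_measurable_integrable[OF
          square_integrable_mult[OF square_integrable_r square_integrable_r_funpow]], symmetric])
  also have "\<dots> = (\<integral>x. r x * r ((Tinv ^^ d) x) \<partial>M)"
    by (rule Bochner_Integration.integral_cong) (auto simp: funpow_T_Tinv)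
  also have "\<dots> = 0"
  proof (rule r_orth_past)
    have "(\<lambda>x. r ((Tinv ^^ d) x)) \<in> borel_measurable (sigma_e {..- int d})"
      using funpow_Tinv_measurable_sigma_e[of d "- int d"] r_measurable_F0
      by (simp add: measurable_compose)
    then show "(\<lambda>x. r ((Tinv ^^ d) x)) \<in> borel_measurable (sigma_e {..-1})"
      by (rule measurable_sigma_e_mono[rotated]) (use d in auto)
    show "integrable M (\<lambda>x. (r ((Tinv ^^ d) x))\<^sup>2)"
      using sq_r_Tinv by (simp add: in_L2_def)
  qed
  finally show ?thesis .
qed

lemma r_funpow_orthogonal:
  "(\<integral>x. r ((T ^^ i) x) * r ((T ^^ j) x) \<partial>M) = (if i = j then (\<integral>x. (r x)\<^sup>2 \<partial>M) else 0)"
proof -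
  have Tn: "measure_preserving M (T ^^ n)" for n by (rule measure_preserving_funpow[OF T_mp])
  have below: "(\<integral>x. r ((T ^^ i) x) * r ((T ^^ j) x) \<partial>M) = 0" if ij: "i < j" for i j
  proof -
    have "T ^^ j = T ^^ (j - i) \<circ> T ^^ i" using ij by (simp add: funpow_add[symmetric])
    then have "(\<integral>x. r ((T ^^ i) x) * r ((T ^^ j) x) \<partial>M)
        = (\<integral>x. r ((T ^^ i) x) * r ((T ^^ (j - i)) ((T ^^ i) x)) \<partial>M)"
      by simp
    also have "\<dots> = (\<integral>x. r x * r ((T ^^ (j - i)) x) \<partial>M)"
      by (rule measure_preserving_integral[OF Tn borel_measurable_integrable[OF
            square_integrable_mult[OF square_integrable_r square_integrable_r_funpow]]])
    also have "\<dots> = 0" by (rule r_orth_shift) (use ij in auto)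
    finally show ?thesis .
  qed
  show ?thesis
  proof (cases "i = j")
    case True
    then show ?thesis
      using measure_preserving_integral[OF Tn borel_measurable_integrable[OF
          square_integrable_mult[OF square_integrable_r square_integrable_r]], of i]
      by (simp add: power2_eq_square)
  next
    case False
    then show ?thesis
      using below[of i j] below[of j i] by (cases "i < j") (simp_all add: mult.commute)
  qed
qed

(* X_i is the random series sum_k a_k e_(phi k) for the injective index map phi k = i - k;
   the beta-redex exposes phi to the general series lemmas. *)
lemma X_series: "X (int i) = (\<lambda>x. \<Sum>k. a k * e ((\<lambda>k. int i - int k) k) x)"
  by (rule ext) (simp add: X_def)

lemma inj_index: "inj (\<lambda>k::nat. int i - int k)"
  by (auto simp: inj_def)

lemma square_integrable_X: "square_integrable M (X (int i))"
  unfolding X_series by (rule square_integrable_series[OF inj_index a_sq])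

lemma X_orth_r_funpow: "(\<integral>x. X (int i) x * r ((T ^^ j) x) \<partial>M) = 0"
  unfolding X_series
  by (rule series_orthogonal[OF inj_index a_sq square_integrable_r_funpow e_orth_r_funpow])

lemma integral_innovation_residual_sums:
  "(\<integral>x. (\<Sum>i<n. X (int i) x - c * e (int i) x) * (\<Sum>i<n. r ((T ^^ i) x)) \<partial>M) = 0"
proof -
  have "(\<lambda>x. (\<Sum>i<n. X (int i) x - c * e (int i) x) * (\<Sum>i<n. r ((T ^^ i) x)))
      = (\<lambda>x. \<Sum>i<n. \<Sum>j<n. X (int j) x * r ((T ^^ i) x) - c * (e (int j) x * r ((T ^^ i) x)))"
    by (rule ext) (simp add: sum_product algebra_simps)
  then have "(\<integral>x. (\<Sum>i<n. X (int i) x - c * e (int i) x) * (\<Sum>i<n. r ((T ^^ i) x)) \<partial>M)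
      = (\<Sum>i<n. \<Sum>j<n. (\<integral>x. X (int j) x * r ((T ^^ i) x) \<partial>M)
                        - c * (\<integral>x. e (int j) x * r ((T ^^ i) x) \<partial>M))"
    using square_integrable_mult[OF square_integrable_X square_integrable_r_funpow]
      square_integrable_mult[OF square_integrable_e square_integrable_r_funpow]
    by (simp add: Bochner_Integration.integral_sum integrable_sum Bochner_Integration.integral_diff)
  also have "\<dots> = 0" by (simp add: X_orth_r_funpow e_orth_r_funpow)
  finally show ?thesis .
qed

lemma integral_sq_residual_sum:
  "(\<integral>x. (\<Sum>i<n. r ((T ^^ i) x))\<^sup>2 \<partial>M) = real n * (\<integral>x. (r x)\<^sup>2 \<partial>M)"
proof -
  have "(\<lambda>x. (\<Sum>i<n. r ((T ^^ i) x))\<^sup>2) = (\<lambda>x. \<Sum>i<n. \<Sum>j<n. r ((T ^^ i) x) * r ((T ^^ j) x))"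
    by (rule ext) (simp add: power2_eq_square sum_product)
  then have "(\<integral>x. (\<Sum>i<n. r ((T ^^ i) x))\<^sup>2 \<partial>M)
      = (\<Sum>i<n. \<Sum>j<n. (\<integral>x. r ((T ^^ i) x) * r ((T ^^ j) x) \<partial>M))"
    using square_integrable_mult[OF square_integrable_r_funpow square_integrable_r_funpow]
    by (simp add: Bochner_Integration.integral_sum integrable_sum)
  also have "\<dots> = real n * (\<integral>x. (r x)\<^sup>2 \<partial>M)"
    by (simp add: r_funpow_orthogonal sum.delta)
  finally show ?thesis .
qed

lemma sq_partial_sums_lower_bound:
  "real n * (\<integral>x. (r x)\<^sup>2 \<partial>M) \<le> (\<integral>x. (\<Sum>i<n. X (int i) x - m ((T ^^ i) x))\<^sup>2 \<partial>M)"
proof -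
  define Z where "Z x = (\<Sum>i<n. X (int i) x - c * e (int i) x)" for x
  define R where "R x = (\<Sum>i<n. r ((T ^^ i) x))" for x
  have sq_Z: "square_integrable M Z" unfolding Z_def
    by (intro square_integrable_sum square_integrable_diff square_integrable_X
        square_integrable_cmult square_integrable_e) simp
  have sq_R: "square_integrable M R" unfolding R_def
    by (intro square_integrable_sum square_integrable_r_funpow) simp
  have decomp: "(\<Sum>i<n. X (int i) x - m ((T ^^ i) x)) = Z x - R x" if "x \<in> space M" for x
  proof -
    have "m ((T ^^ i) x) = r ((T ^^ i) x) + c * e (int i) x" for i
      using e_funpow_T[OF that, of 0 i] by (simp add: r_def)
    then show ?thesis unfolding Z_def R_def by (simp add: sum_subtractf sum.distrib algebra_simps)
  qed
  have "(\<integral>x. (\<Sum>i<n. X (int i) x - m ((T ^^ i) x))\<^sup>2 \<partial>M) = (\<integral>x. (Z x - R x)\<^sup>2 \<partial>M)"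
    by (rule Bochner_Integration.integral_cong) (auto simp: decomp)
  also have "\<dots> = (\<integral>x. (Z x)\<^sup>2 \<partial>M) - 2 * (\<integral>x. Z x * R x \<partial>M) + (\<integral>x. (R x)\<^sup>2 \<partial>M)"
  proof -
    have "(\<lambda>x. (Z x - R x)\<^sup>2) = (\<lambda>x. (Z x)\<^sup>2 - 2 * (Z x * R x) + (R x)\<^sup>2)"
      by (rule ext) (simp add: power2_eq_square algebra_simps)
    then show ?thesis using sq_Z sq_R square_integrable_mult[OF sq_Z sq_R]
      by (simp add: in_L2_def Bochner_Integration.integral_diff)
  qed
  also have "\<dots> \<ge> real n * (\<integral>x. (r x)\<^sup>2 \<partial>M)"
    using integral_innovation_residual_sums[of n] integral_sq_residual_sum[of n]
    unfolding Z_def R_def by simp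
  finally show ?thesis .
qed

end

theorem lemma1:
  fixes M :: "'a measure" and e :: "int \<Rightarrow> 'a \<Rightarrow> real" and T :: "'a \<Rightarrow> 'a"
    and a :: "nat \<Rightarrow> real" and m :: "'a \<Rightarrow> real" and X :: "int \<Rightarrow> 'a \<Rightarrow> real"
  assumes P: "prob_space M"
    and indep: "prob_space.indep_vars M (\<lambda>_. borel) e UNIV"
    and gauss: "\<And>i. distributed M lborel (e i) std_normal_density"
    and T_mp: "measure_preserving M T"
    and T_bij: "bij_betw T (space M) (space M)"
    and Tinv_mp: "measure_preserving M (the_inv_into (space M) T)"
    and shift: "\<And>i x. x \<in> space M \<Longrightarrow> e i (T x) = e (i + 1) x"
    and a_sq: "summable (\<lambda>i. (a i)\<^sup>2)"
    and X_def: "\<And>n x. X n x = (\<Sum>i. a i * e (n - int i) x)"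
    and m_L2: "in_L2 M (nat_filtration M e 0) m"
    and m_orth: "\<And>g. in_L2 M (nat_filtration M e (-1)) g \<Longrightarrow> (\<integral>x. m x * g x \<partial>M) = 0"
    and lim: "(\<lambda>n. L2norm M (\<lambda>x. \<Sum>i<n. X (int i) x - m ((T ^^ i) x)) / sqrt (real n))
               \<longlonglongrightarrow> 0"
  shows "\<exists>c::real. AE x in M. m x = c * e 0 x"
proof -
  interpret innovation_model M e T a m X
    by (intro innovation_model.intro std_normal_indep_std_seq[OF P indep gauss]
        innovation_model_axioms.intro) (fact assms)+
  define I where "I = (\<integral>x. (r x)\<^sup>2 \<partial>M)"
  have "sqrt I \<le> L2norm M (\<lambda>x. \<Sum>i<n. X (int i) x - m ((T ^^ i) x)) / sqrt (real n)"
    if "n \<ge> 1" for n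
  proof -
    have "sqrt (real n) * sqrt I \<le> L2norm M (\<lambda>x. \<Sum>i<n. X (int i) x - m ((T ^^ i) x))"
      using sq_partial_sums_lower_bound[of n]
      unfolding L2norm_def I_def real_sqrt_mult[symmetric] by simp
    then show ?thesis using that by (simp add: field_simps mult.commute)
  qed
  then have "sqrt I \<le> 0" by (intro LIMSEQ_le_const[OF lim]) auto
  moreover have "0 \<le> I" unfolding I_def by simp
  ultimately have "(\<integral>x. (r x)\<^sup>2 \<partial>M) = 0" unfolding I_def by simp
  then have "AE x in M. r x = 0"
    using integral_nonneg_eq_0_iff_AE[of M "\<lambda>x. (r x)\<^sup>2"] square_integrable_r
    by (simp add: in_L2_def)
  then have "AE x in M. m x = c * e 0 x"
    by (rule AE_mp) (auto simp: r_def intro!: AE_I2)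
  then show ?thesis by blast
qed

end
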